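(* Let $k\ge 2$ and let $\mathrm{R}_{2k}=\{a_0,a_1,\dots,a_{2k-1}\}$ be the dihedral quandle of order $2k$, i.e. the set $\mathbb{Z}_{2k}$ with operation $a_i\cdot a_j=a_{(2j-i)\bmod 2k}$. In the integral quandle ring $\mathbb{Z}[\mathrm{R}_{2k}]$, let $e_i=a_i-a_0$ for $i=1,\dots,2k-1$. Then $e_i\cdot e_k=0$ for all $i=1,2,\dots,2k-1$.
   Context: The quandle ring $\mathbb{Z}[A]$ of a quandle $A$ is the free abelian group on $A$ with multiplication given by the bilinear extension of the quandle operation: $\left(\sum_i r_i a_i\right)\cdot\left(\sum_j s_j a_j\right)=\sum_{i,j} r_i s_j (a_i\cdot a_j)$. *)

theory Defs
  imports Main
begin

text \<open>Integral quandle ring of a finite quandle (A, op): elements are integer-valued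
functions on A (the free abelian group on A, as functions supported in A);
multiplication is the bilinear extension of the quandle operation.\<close>

definition qring_mult :: "'a set \<Rightarrow> ('a \<Rightarrow> 'a \<Rightarrow> 'a) \<Rightarrow> ('a \<Rightarrow> int) \<Rightarrow> ('a \<Rightarrow> int) \<Rightarrow> ('a \<Rightarrow> int)" where
  "qring_mult A op x y = (\<lambda>c. \<Sum>a\<in>A. \<Sum>b\<in>A. if op a b = c then x a * y b else 0)"

definition qbasis :: "'a \<Rightarrow> ('a \<Rightarrow> int)" where
  "qbasis a = (\<lambda>c. if c = a then 1 else 0)"

definition dihedral_op :: "nat \<Rightarrow> nat \<Rightarrow> nat \<Rightarrow> nat" where
  "dihedral_op n i j = nat ((2 * int j - int i) mod int n)"

end

theory Submission
  imports Defs
begin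

text \<open>Since \<open>a\<^sub>i \<cdot> a\<^sub>j\<close> depends on \<open>j\<close> only through \<open>2j mod 2k\<close>, right multiplication by
  \<open>a\<^sub>k\<close> and by \<open>a\<^sub>0\<close> agree on all of \<open>R\<^sub>2\<^sub>k\<close>. Expanding \<open>(a\<^sub>i - a\<^sub>0)(a\<^sub>k - a\<^sub>0)\<close> bilinearly,
  the four terms therefore cancel in pairs.\<close>

lemma qring_mult_diff_left:
  "qring_mult A op (\<lambda>c. x c - x' c) y = (\<lambda>c. qring_mult A op x y c - qring_mult A op x' y c)"
  unfolding qring_mult_def
  by (simp add: sum_subtractf[symmetric] left_diff_distrib if_distrib cong: if_cong)

lemma qring_mult_diff_right:
  "qring_mult A op x (\<lambda>c. y c - y' c) = (\<lambda>c. qring_mult A op x y c - qring_mult A op x y' c)"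
  unfolding qring_mult_def
  by (simp add: sum_subtractf[symmetric] right_diff_distrib if_distrib cong: if_cong)

lemma qring_mult_qbasis:
  assumes "finite A" "a \<in> A" "b \<in> A"
  shows "qring_mult A op (qbasis a) (qbasis b) = qbasis (op a b)"
proof
  fix c
  have "qring_mult A op (qbasis a) (qbasis b) c
      = (\<Sum>a'\<in>A. if a' = a then (\<Sum>b'\<in>A. if b' = b then qbasis (op a b') c else 0) else 0)"
    unfolding qring_mult_def qbasis_def by (intro sum.cong) (auto intro!: sum.neutral sum.cong)
  also have "\<dots> = qbasis (op a b) c"
    using assms by simp
  finally show "qring_mult A op (qbasis a) (qbasis b) c = qbasis (op a b) c" .
qed

lemma qring_mult_qbasis_diff_eq_0:
  assumes "finite A" "a \<in> A" "a' \<in> A" "b \<in> A" "b' \<in> A"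
    and "op a b = op a b'" and "op a' b = op a' b'"
  shows "qring_mult A op (\<lambda>c. qbasis a c - qbasis a' c) (\<lambda>c. qbasis b c - qbasis b' c) = (\<lambda>c. 0)"
  using assms by (simp add: qring_mult_diff_left qring_mult_diff_right qring_mult_qbasis)

lemma dihedral_op_cong_right:
  assumes "(2 * j) mod n = (2 * j') mod n"
  shows "dihedral_op n i j = dihedral_op n i j'"
proof -
  have "(2 * int j) mod int n = (2 * int j') mod int n"
    using assms by (metis of_nat_mult of_nat_numeral zmod_int)
  then have "(2 * int j - int i) mod int n = (2 * int j' - int i) mod int n"
    by (rule mod_diff_cong) simp
  then show ?thesis
    unfolding dihedral_op_def by simp
qed

theorem lemma2p2:
  fixes k i :: nat
  assumes "k \<ge> 2" and "1 \<le> i" and "i \<le> 2 * k - 1"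
  shows "qring_mult {0..<2*k} (dihedral_op (2*k))
           (\<lambda>c. qbasis i c - qbasis 0 c) (\<lambda>c. qbasis k c - qbasis 0 c) = (\<lambda>c. 0)"
proof -
  have "dihedral_op (2*k) a k = dihedral_op (2*k) a 0" for a
    by (rule dihedral_op_cong_right) simp
  then show ?thesis
    using assms by (intro qring_mult_qbasis_diff_eq_0) auto
qed

end
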